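(* For every even $n\ge2$ and every alphabet $\Sigma$, $\mathsf{sumPI}(\mathrm{Col})\le2$.
   Context: The collision problem $\mathrm{Col}$ is the partial function on $S\subseteq\Sigma^n$ where $S$ consists of the positive inputs, $x=x_1\cdots x_n$ with all $x_i$ distinct ($\mathrm{Col}(x)=1$), and the negative inputs, $x$ such that for each $i$ there is exactly one $j\neq i$ with $x_i=x_j$ ($\mathrm{Col}(x)=0$). For $f:S\to\{0,1\}$, $S\subseteq\Sigma^n$, with $p=\{p_x:x\in S\}$ ranging over families of probability distributions on $[n]$, $$\mathsf{sumPI}(f)=\min_{p}\ \max_{x,y\in S:\ f(x)\neq f(y)} \frac{1}{\sum_{i:\,x_i\neq y_i}\sqrt{p_x(i)p_y(i)}}.$$ *)

theory Defs
  imports Complex_Main "HOL-Library.Extended_Real"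
begin

text \<open>Inputs are strings of length n over an alphabet Sigma, represented as lists;
  the index set [n] is {0..<n}.\<close>

definition inputs :: "nat \<Rightarrow> 'a set \<Rightarrow> 'a list set" where
  "inputs n \<Sigma> = {x. length x = n \<and> set x \<subseteq> \<Sigma>}"

definition Col_pos :: "nat \<Rightarrow> 'a set \<Rightarrow> 'a list set" where
  "Col_pos n \<Sigma> = {x \<in> inputs n \<Sigma>. distinct x}"

definition Col_neg :: "nat \<Rightarrow> 'a set \<Rightarrow> 'a list set" where
  "Col_neg n \<Sigma> = {x \<in> inputs n \<Sigma>.
      \<forall>i<n. \<exists>!j. j < n \<and> j \<noteq> i \<and> x ! i = x ! j}"

text \<open>Domain S of the partial function Col, and its values (True = 1, False = 0).\<close>
definition Col_dom :: "nat \<Rightarrow> 'a set \<Rightarrow> 'a list set" where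
  "Col_dom n \<Sigma> = Col_pos n \<Sigma> \<union> Col_neg n \<Sigma>"

definition Col :: "nat \<Rightarrow> 'a set \<Rightarrow> 'a list \<Rightarrow> bool" where
  "Col n \<Sigma> x = (x \<in> Col_pos n \<Sigma>)"

definition prob_dist :: "nat \<Rightarrow> (nat \<Rightarrow> real) \<Rightarrow> bool" where
  "prob_dist n q \<longleftrightarrow> (\<forall>i<n. 0 \<le> q i) \<and> (\<Sum>i<n. q i) = 1"

definition ereal_recip :: "real \<Rightarrow> ereal" where
  "ereal_recip s = (if s = 0 then \<infinity> else ereal (1 / s))"

text \<open>sumPI(f) for a partial function f : S \<rightarrow> {0,1}, S \<subseteq> \<Sigma>^n.
  The minimum over p is rendered as an infimum, the maximum over pairs as a supremum.\<close>
definition sumPI :: "nat \<Rightarrow> 'a list set \<Rightarrow> ('a list \<Rightarrow> bool) \<Rightarrow> ereal" where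
  "sumPI n S f =
     (INF p \<in> {p :: 'a list \<Rightarrow> nat \<Rightarrow> real. \<forall>x\<in>S. prob_dist n (p x)}.
        SUP xy \<in> {(x, y). x \<in> S \<and> y \<in> S \<and> f x \<noteq> f y}.
          ereal_recip (\<Sum>i \<in> {i. i < n \<and> fst xy ! i \<noteq> snd xy ! i}.
                          sqrt (p (fst xy) i * p (snd xy) i)))"

end

theory Submission
  imports Defs
begin

text \<open>Take the uniform distribution 1/n for every input. If x has distinct symbols and every
  symbol of y occurs exactly twice, then each position i where x and y agree has a partner
  position j with y_j = y_i = x_i \<noteq> x_j, so x and y disagree at j; uniqueness of partners
  makes i \<mapsto> j injective. Hence x and y disagree in at least n/2 positions, and the sum in
  sumPI is at least (n/2) \<cdot> (1/n) = 1/2.\<close>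

lemma unique_partner_function:
  assumes "\<forall>i<n. \<exists>!j. j < n \<and> j \<noteq> i \<and> y ! i = y ! j"
  obtains m where "\<And>i. i < n \<Longrightarrow> m i < n \<and> m i \<noteq> i \<and> y ! i = y ! m i"
    and "inj_on m {..<n}"
proof
  define m where "m i = (THE j. j < n \<and> j \<noteq> i \<and> y ! i = y ! j)" for i
  show m: "m i < n \<and> m i \<noteq> i \<and> y ! i = y ! m i" if "i < n" for i
    unfolding m_def using theI'[OF assms[rule_format, OF that]] .
  show "inj_on m {..<n}"
  proof (rule inj_onI)
    fix i k assume "i \<in> {..<n}" "k \<in> {..<n}" "m i = m k"
    then have "i \<noteq> m i \<and> y ! m i = y ! i" "k \<noteq> m i \<and> y ! m i = y ! k"
      using m by (metis lessThan_iff)+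
    moreover have "m i < n" using m \<open>i \<in> {..<n}\<close> by blast
    ultimately show "i = k" using assms \<open>i \<in> {..<n}\<close> \<open>k \<in> {..<n}\<close> by blast
  qed
qed

lemma distinct_disagrees_with_paired:
  assumes "distinct x" and "length x = n"
    and paired: "\<forall>i<n. \<exists>!j. j < n \<and> j \<noteq> i \<and> y ! i = y ! j"
  shows "n \<le> 2 * card {i. i < n \<and> x ! i \<noteq> y ! i}"
proof -
  obtain m where m: "\<And>i. i < n \<Longrightarrow> m i < n \<and> m i \<noteq> i \<and> y ! i = y ! m i"
    and inj: "inj_on m {..<n}"
    using unique_partner_function[OF paired] by blast
  define A where "A = {i. i < n \<and> x ! i = y ! i}"
  define D where "D = {i. i < n \<and> x ! i \<noteq> y ! i}"
  have "m ` A \<subseteq> D"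
  proof
    fix j assume "j \<in> m ` A"
    then obtain i where i: "i < n" "x ! i = y ! i" "j = m i" by (auto simp: A_def)
    have "x ! m i \<noteq> x ! i" using assms(1,2) m[OF \<open>i < n\<close>] i(1) by (simp add: nth_eq_iff_index_eq)
    then show "j \<in> D" using m[OF \<open>i < n\<close>] i by (auto simp: D_def)
  qed
  moreover have "inj_on m A" using inj by (rule inj_on_subset) (auto simp: A_def)
  ultimately have "card A \<le> card D" by (simp add: D_def card_inj_on_le)
  moreover have "card A + card D = n"
  proof -
    have "A \<union> D = {..<n}" "A \<inter> D = {}" by (auto simp: A_def D_def)
    then show ?thesis using card_Un_disjoint[of A D] by (simp add: A_def D_def)
  qed
  ultimately show ?thesis by (simp add: D_def)
qed

lemma Col_disagreements:
  assumes "x \<in> Col_dom n \<Sigma>" "y \<in> Col_dom n \<Sigma>" "Col n \<Sigma> x \<noteq> Col n \<Sigma> y"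
  shows "n \<le> 2 * card {i. i < n \<and> x ! i \<noteq> y ! i}"
proof -
  have disagree: "n \<le> 2 * card {i. i < n \<and> u ! i \<noteq> v ! i}"
    if "u \<in> Col_pos n \<Sigma>" "v \<in> Col_neg n \<Sigma>" for u v
    using that by (intro distinct_disagrees_with_paired) (auto simp: Col_pos_def Col_neg_def inputs_def)
  have "{i. i < n \<and> y ! i \<noteq> x ! i} = {i. i < n \<and> x ! i \<noteq> y ! i}" by auto
  then show ?thesis
    using assms disagree[of x y] disagree[of y x] by (auto simp: Col_def Col_dom_def)
qed

lemma sumPI_le_if_disagreements:
  fixes c :: real
  assumes "n > 0"
    and disagree: "\<And>x y. x \<in> S \<Longrightarrow> y \<in> S \<Longrightarrow> f x \<noteq> f y \<Longrightarrow>
        real n \<le> c * card {i. i < n \<and> x ! i \<noteq> y ! i}"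
  shows "sumPI n S f \<le> ereal c"
  unfolding sumPI_def
proof (rule INF_lower2)
  let ?uniform = "\<lambda>(x::'a list) (i::nat). 1 / real n"
  show "?uniform \<in> {p. \<forall>x\<in>S. prob_dist n (p x)}"
    using assms(1) by (simp add: prob_dist_def)
  show "(SUP xy \<in> {(x, y). x \<in> S \<and> y \<in> S \<and> f x \<noteq> f y}.
          ereal_recip (\<Sum>i \<in> {i. i < n \<and> fst xy ! i \<noteq> snd xy ! i}.
             sqrt (?uniform (fst xy) i * ?uniform (snd xy) i))) \<le> ereal c"
  proof (rule SUP_least, clarify)
    fix x y assume "x \<in> S" "y \<in> S" "f x \<noteq> f y"
    define d where "d = real (card {i. i < n \<and> x ! i \<noteq> y ! i})"
    have "real n \<le> c * d" using disagree[OF \<open>x \<in> S\<close> \<open>y \<in> S\<close> \<open>f x \<noteq> f y\<close>] by (simp add: d_def)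
    moreover have "d \<ge> 0" by (simp add: d_def)
    ultimately have "d > 0" using assms(1) by (cases "d = 0") auto
    have "sqrt (1 / real n * (1 / real n)) = 1 / real n"
      by (simp add: real_sqrt_mult real_sqrt_divide)
    then have "(\<Sum>i \<in> {i. i < n \<and> x ! i \<noteq> y ! i}. sqrt (1 / real n * (1 / real n))) = d / real n"
      by (simp add: d_def)
    moreover have "real n / d \<le> c" using \<open>real n \<le> c * d\<close> \<open>d > 0\<close> by (simp add: divide_le_eq)
    ultimately show "ereal_recip (\<Sum>i \<in> {i. i < n \<and> fst (x, y) ! i \<noteq> snd (x, y) ! i}.
        sqrt (?uniform (fst (x, y)) i * ?uniform (snd (x, y)) i)) \<le> ereal c"
      using \<open>d > 0\<close> assms(1) by (simp add: ereal_recip_def)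
  qed
qed

theorem mainTheorem18:
  fixes n :: nat and \<Sigma> :: "'a set"
  assumes "even n" and "n \<ge> 2" and "finite \<Sigma>"
  shows "sumPI n (Col_dom n \<Sigma>) (Col n \<Sigma>) \<le> 2"
proof -
  have "sumPI n (Col_dom n \<Sigma>) (Col n \<Sigma>) \<le> ereal 2"
  proof (rule sumPI_le_if_disagreements)
    show "n > 0" using \<open>n \<ge> 2\<close> by simp
    show "real n \<le> 2 * real (card {i. i < n \<and> x ! i \<noteq> y ! i})"
      if "x \<in> Col_dom n \<Sigma>" "y \<in> Col_dom n \<Sigma>" "Col n \<Sigma> x \<noteq> Col n \<Sigma> y" for x y
      using Col_disagreements[OF that] by linarith
  qed
  then show ?thesis by simp
qed

end
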